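(* Assume Assumption A and that the limiting chain $X_R$ has $\mathfrak n\ge2$ recurrent classes $\mathscr E_1,\dots,\mathscr E_{\mathfrak n}$. Let $\mathscr E=\bigcup_x\mathscr E_x$, $\breve{\mathscr E}_x=\bigcup_{y\ne x}\mathscr E_y$, let $R^{\mathscr E}_N$ be the jump rates of the trace of $\eta^N$ on $\mathscr E$, and define $$\frac1{\gamma_N}=\sum_{x=1}^{\mathfrak n}\sum_{\eta\in\mathscr E_x}\sum_{\xi\in\breve{\mathscr E}_x}R^{\mathscr E}_N(\eta,\xi).$$ Then $\lim_{N\to\infty}\alpha_N/\gamma_N=0$.
   Context: Setting: $E$ is a fixed finite set; for each $N\ge1$, $(\eta^N_t)$ is a continuous-time irreducible Markov chain on $E$ with jump rates $R_N(\eta,\xi)$ and unique invariant probability measure $\mu_N$. For nonempty $F\subset E$ the trace on $F$ is $\eta^F_t=\eta^N_{S_F(t)}$ with $S_F(t)=\sup\{s:\int_0^s\mathbf 1\{\eta^N_r\in F\}dr\le t\}$, an irreducible Markov chain on $F$ with jump rates $R^F_N$. Ordered families: a finite family of sequences of positive reals $(a^r_N)_{N\ge1}$, $r\in\mathfrak R$, is ordered if for all $r\neq s$ the sequence $\arctan(a^r_N/a^s_N)$ converges. Assumption A: (i) for each $\eta\neq\xi$, either $R_N(\eta,\xi)=0$ for all $N$ or $R_N(\eta,\xi)>0$ for all $N$; let $\mathbb B$ be the set of pairs with positive rates. (ii) For every $m\ge1$ the family $\prod_{(\eta,\xi)\in\mathbb B}R_N(\eta,\xi)^{k(\eta,\xi)}$,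 $k:\mathbb B\to\mathbb Z_+$ with $\sum k=m$, is ordered. Limiting chain: $\alpha_N^{-1}=\sum_\eta\sum_{\xi\ne\eta}R_N(\eta,\xi)$; $R(\eta,\xi)=\lim_N\alpha_NR_N(\eta,\xi)\in[0,1]$ (exists under Assumption A); $X_R$ is the Markov chain on $E$ with rates $R$. *)

theory Defs
  imports Complex_Main
begin

text \<open>Rates are functions Q :: 'a => 'a => real; only off-diagonal values on E matter.\<close>

definition rate_edges :: "'a set \<Rightarrow> ('a \<Rightarrow> 'a \<Rightarrow> real) \<Rightarrow> ('a \<times> 'a) set" where
  "rate_edges E Q = {(x, y). x \<in> E \<and> y \<in> E \<and> x \<noteq> y \<and> Q x y > 0}"

definition irreducible_rates :: "'a set \<Rightarrow> ('a \<Rightarrow> 'a \<Rightarrow> real) \<Rightarrow> bool" where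
  "irreducible_rates E Q \<longleftrightarrow> (\<forall>x\<in>E. \<forall>y\<in>E. (x, y) \<in> (rate_edges E Q)\<^sup>*)"

definition reaches :: "'a set \<Rightarrow> ('a \<Rightarrow> 'a \<Rightarrow> real) \<Rightarrow> 'a \<Rightarrow> 'a \<Rightarrow> bool" where
  "reaches E Q x y \<longleftrightarrow> (x, y) \<in> (rate_edges E Q)\<^sup>*"

definition recurrent_state :: "'a set \<Rightarrow> ('a \<Rightarrow> 'a \<Rightarrow> real) \<Rightarrow> 'a \<Rightarrow> bool" where
  "recurrent_state E Q x \<longleftrightarrow> x \<in> E \<and> (\<forall>y. reaches E Q x y \<longrightarrow> reaches E Q y x)"

definition recurrent_classes :: "'a set \<Rightarrow> ('a \<Rightarrow> 'a \<Rightarrow> real) \<Rightarrow> 'a set set" where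
  "recurrent_classes E Q =
     {{y \<in> E. reaches E Q x y \<and> reaches E Q y x} | x. recurrent_state E Q x}"

definition holding_rate :: "'a set \<Rightarrow> ('a \<Rightarrow> 'a \<Rightarrow> real) \<Rightarrow> 'a \<Rightarrow> real" where
  "holding_rate E Q x = (\<Sum>z\<in>E - {x}. Q x z)"

definition jump_prob :: "'a set \<Rightarrow> ('a \<Rightarrow> 'a \<Rightarrow> real) \<Rightarrow> 'a \<Rightarrow> 'a \<Rightarrow> real" where
  "jump_prob E Q x z = (if z = x then 0 else Q x z / holding_rate E Q x)"

text \<open>avoid_kernel E Q F n z w: probability that the jump chain started at z is at w after
  n steps having stayed in E - F during steps 0..n.\<close>
fun avoid_kernel :: "'a set \<Rightarrow> ('a \<Rightarrow> 'a \<Rightarrow> real) \<Rightarrow> 'a set \<Rightarrow> nat \<Rightarrow> 'a \<Rightarrow> 'a \<Rightarrow> real" where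
  "avoid_kernel E Q F 0 z w = (if z = w then 1 else 0)"
| "avoid_kernel E Q F (Suc n) z w = (\<Sum>v\<in>E - F. avoid_kernel E Q F n z v * jump_prob E Q v w)"

text \<open>Probability that the jump chain started at z (in E - F) enters F for the first time at xi.\<close>
definition hit_prob :: "'a set \<Rightarrow> ('a \<Rightarrow> 'a \<Rightarrow> real) \<Rightarrow> 'a set \<Rightarrow> 'a \<Rightarrow> 'a \<Rightarrow> real" where
  "hit_prob E Q F z xi = (\<Sum>n. \<Sum>w\<in>E - F. avoid_kernel E Q F n z w * jump_prob E Q w xi)"

text \<open>Jump rates R^F of the trace on F (for eta, xi in F, eta ~= xi):
  R^F(eta,xi) = R(eta,xi) + sum_{zeta not in F} R(eta,zeta) P_zeta[first entry into F at xi].\<close>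
definition trace_rate :: "'a set \<Rightarrow> ('a \<Rightarrow> 'a \<Rightarrow> real) \<Rightarrow> 'a set \<Rightarrow> 'a \<Rightarrow> 'a \<Rightarrow> real" where
  "trace_rate E Q F eta xi = Q eta xi + (\<Sum>z\<in>E - F. Q eta z * hit_prob E Q F z xi)"

definition ordered_family :: "'r set \<Rightarrow> ('r \<Rightarrow> nat \<Rightarrow> real) \<Rightarrow> bool" where
  "ordered_family I a \<longleftrightarrow> finite I \<and> (\<forall>r\<in>I. \<forall>N. a r N > 0) \<and>
     (\<forall>r\<in>I. \<forall>s\<in>I. r \<noteq> s \<longrightarrow> convergent (\<lambda>N. arctan (a r N / a s N)))"

definition pos_bonds :: "'a set \<Rightarrow> (nat \<Rightarrow> 'a \<Rightarrow> 'a \<Rightarrow> real) \<Rightarrow> ('a \<times> 'a) set" where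
  "pos_bonds E R = {(x, y). x \<in> E \<and> y \<in> E \<and> x \<noteq> y \<and> (\<forall>N. R N x y > 0)}"

definition assumptionA :: "'a set \<Rightarrow> (nat \<Rightarrow> 'a \<Rightarrow> 'a \<Rightarrow> real) \<Rightarrow> bool" where
  "assumptionA E R \<longleftrightarrow>
     (\<forall>x\<in>E. \<forall>y\<in>E. x \<noteq> y \<longrightarrow> (\<forall>N. R N x y = 0) \<or> (\<forall>N. R N x y > 0)) \<and>
     (\<forall>m::nat. m \<ge> 1 \<longrightarrow>
        ordered_family
          {k :: 'a \<times> 'a \<Rightarrow> nat. (\<forall>p. p \<notin> pos_bonds E R \<longrightarrow> k p = 0) \<and>
                                 (\<Sum>p\<in>pos_bonds E R. k p) = m}
          (\<lambda>k N. \<Prod>p\<in>pos_bonds E R. R N (fst p) (snd p) ^ k p))"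

definition alpha :: "'a set \<Rightarrow> (nat \<Rightarrow> 'a \<Rightarrow> 'a \<Rightarrow> real) \<Rightarrow> nat \<Rightarrow> real" where
  "alpha E R N = 1 / (\<Sum>x\<in>E. \<Sum>y\<in>E - {x}. R N x y)"

definition limit_rates :: "'a set \<Rightarrow> (nat \<Rightarrow> 'a \<Rightarrow> 'a \<Rightarrow> real) \<Rightarrow> 'a \<Rightarrow> 'a \<Rightarrow> real" where
  "limit_rates E R x y = lim (\<lambda>N. alpha E R N * R N x y)"

definition gamma :: "'a set \<Rightarrow> (nat \<Rightarrow> 'a \<Rightarrow> 'a \<Rightarrow> real) \<Rightarrow> nat \<Rightarrow> real" where
  "gamma E R N =
     (let Cs = recurrent_classes E (limit_rates E R); Es = \<Union>Cs in
      1 / (\<Sum>C\<in>Cs. \<Sum>x\<in>C. \<Sum>y\<in>Es - C. trace_rate E (R N) Es x y))"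

end

theory Submission
  imports Defs
begin

(* Under Assumption A the positive rates form an ordered family, so the share of every rate
   in the total converges; hence each rescaled rate alpha_N R_N(eta, xi) converges, to
   R(eta, xi). A recurrent class of the limiting chain is closed, so R vanishes from a class
   to any state outside it. The rescaled trace rate between two distinct classes is the direct
   rescaled rate plus rescaled rates into states outside all classes, weighted by hitting
   probabilities at most 1; it therefore tends to 0, and alpha_N / gamma_N is a finite sum of
   such terms. *)

lemma jump_prob_nonneg:
  assumes "\<And>x y. x \<in> E \<Longrightarrow> y \<in> E \<Longrightarrow> x \<noteq> y \<Longrightarrow> Q x y \<ge> 0"
    and "v \<in> E" "w \<in> E"
  shows "jump_prob E Q v w \<ge> 0"
proof -
  have "holding_rate E Q v \<ge> 0"
    unfolding holding_rate_def using assms by (intro sum_nonneg) auto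
  then show ?thesis using assms unfolding jump_prob_def by auto
qed

lemma sum_jump_prob_le_1:
  assumes "finite E" and "\<And>x y. x \<in> E \<Longrightarrow> y \<in> E \<Longrightarrow> x \<noteq> y \<Longrightarrow> Q x y \<ge> 0"
    and "v \<in> E"
  shows "(\<Sum>u\<in>E. jump_prob E Q v u) \<le> 1"
proof -
  have "(\<Sum>u\<in>E. jump_prob E Q v u) = (\<Sum>u\<in>E - {v}. jump_prob E Q v u) + jump_prob E Q v v"
    using assms(1,3) by (metis add.commute sum.remove)
  also have "\<dots> = (\<Sum>u\<in>E - {v}. Q v u / holding_rate E Q v)"
    unfolding jump_prob_def by (auto intro: sum.cong)
  also have "\<dots> = holding_rate E Q v / holding_rate E Q v"
    unfolding holding_rate_def by (simp only: sum_divide_distrib)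
  also have "\<dots> \<le> 1"
    by (simp only: divide_le_eq_1) auto
  finally show ?thesis .
qed

lemma avoid_kernel_nonneg:
  assumes "\<And>x y. x \<in> E \<Longrightarrow> y \<in> E \<Longrightarrow> x \<noteq> y \<Longrightarrow> Q x y \<ge> 0"
    and "w \<in> E"
  shows "avoid_kernel E Q F n z w \<ge> 0"
  using assms(2)
proof (induction n arbitrary: w)
  case 0
  then show ?case by simp
next
  case (Suc n)
  then show ?case using jump_prob_nonneg[OF assms(1)]
    by (auto intro!: sum_nonneg mult_nonneg_nonneg)
qed

text \<open>Mass balance of one step of the jump chain killed on entering \<open>F\<close>; iterated, it bounds
  the partial sums of the series defining \<open>hit_prob\<close> by the initial mass 1.\<close>

lemma avoid_kernel_mass_step:
  assumes fin: "finite E" and nn: "\<And>x y. x \<in> E \<Longrightarrow> y \<in> E \<Longrightarrow> x \<noteq> y \<Longrightarrow> Q x y \<ge> 0"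
    and FE: "F \<subseteq> E" and xi: "xi \<in> F"
  shows "(\<Sum>w\<in>E - F. avoid_kernel E Q F n z w * jump_prob E Q w xi)
           + (\<Sum>w\<in>E - F. avoid_kernel E Q F (Suc n) z w)
         \<le> (\<Sum>w\<in>E - F. avoid_kernel E Q F n z w)"
proof -
  define a where "a w = avoid_kernel E Q F n z w" for w
  define flow where "flow u = (\<Sum>v\<in>E - F. a v * jump_prob E Q v u)" for u
  have flow_nonneg: "flow u \<ge> 0" if "u \<in> E" for u
    unfolding flow_def a_def
    using that avoid_kernel_nonneg[of E Q, OF nn] jump_prob_nonneg[of E Q, OF nn] by (auto intro!: sum_nonneg mult_nonneg_nonneg)
  have "flow xi \<le> (\<Sum>u\<in>F. flow u)"
    using xi FE finite_subset[OF FE fin] flow_nonneg by (intro member_le_sum) auto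
  then have "flow xi + (\<Sum>u\<in>E - F. flow u) \<le> (\<Sum>u\<in>E. flow u)"
    using sum.subset_diff[OF FE fin, of flow] by simp
  also have "\<dots> = (\<Sum>v\<in>E - F. \<Sum>u\<in>E. a v * jump_prob E Q v u)"
    unfolding flow_def by (rule sum.swap)
  also have "\<dots> = (\<Sum>v\<in>E - F. a v * (\<Sum>u\<in>E. jump_prob E Q v u))"
    by (simp only: sum_distrib_left)
  also have "\<dots> \<le> (\<Sum>v\<in>E - F. a v)"
    using avoid_kernel_nonneg[of E Q, OF nn] sum_jump_prob_le_1[of E Q, OF fin nn] unfolding a_def
    by (intro sum_mono mult_left_le) auto
  finally show ?thesis by (simp add: flow_def a_def)
qed

lemma hit_prob_bounds:
  assumes fin: "finite E" and nn: "\<And>x y. x \<in> E \<Longrightarrow> y \<in> E \<Longrightarrow> x \<noteq> y \<Longrightarrow> Q x y \<ge> 0"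
    and FE: "F \<subseteq> E" and xi: "xi \<in> F"
  shows "0 \<le> hit_prob E Q F z xi" and "hit_prob E Q F z xi \<le> 1"
proof -
  define entry where "entry n = (\<Sum>w\<in>E - F. avoid_kernel E Q F n z w * jump_prob E Q w xi)" for n
  define mass where "mass n = (\<Sum>w\<in>E - F. avoid_kernel E Q F n z w)" for n
  have entry_nonneg: "entry n \<ge> 0" for n
    unfolding entry_def
    using xi FE avoid_kernel_nonneg[of E Q, OF nn] jump_prob_nonneg[of E Q, OF nn] by (auto intro!: sum_nonneg mult_nonneg_nonneg)
  have mass_nonneg: "mass n \<ge> 0" for n
    unfolding mass_def using avoid_kernel_nonneg[of E Q, OF nn] by (auto intro: sum_nonneg)
  have mass_0: "mass 0 \<le> 1"
    using fin by (simp add: mass_def sum.delta)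
  have entries_plus_mass: "(\<Sum>i<M. entry i) + mass M \<le> mass 0" for M
  proof (induction M)
    case 0
    then show ?case by simp
  next
    case (Suc M)
    then show ?case
      using avoid_kernel_mass_step[where Q = Q and n = M and z = z, OF fin nn FE xi]
      by (simp add: entry_def mass_def)
  qed
  have partial_le_1: "(\<Sum>i<M. entry i) \<le> 1" for M
    using entries_plus_mass[of M] mass_nonneg[of M] mass_0 by linarith
  have summable: "summable entry"
    by (rule summableI_nonneg_bounded[OF entry_nonneg partial_le_1])
  have "hit_prob E Q F z xi = suminf entry"
    unfolding hit_prob_def entry_def ..
  then show "0 \<le> hit_prob E Q F z xi" and "hit_prob E Q F z xi \<le> 1"
    using suminf_nonneg[OF summable entry_nonneg] suminf_le_const[OF summable partial_le_1]
    by simp_all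
qed

lemma convergent_ratio_or_inverse_ratio_tendsto_0:
  fixes u v :: "nat \<Rightarrow> real"
  assumes u: "\<And>N. u N > 0" and v: "\<And>N. v N > 0"
    and conv: "convergent (\<lambda>N. arctan (u N / v N))"
  shows "convergent (\<lambda>N. u N / v N) \<or> (\<lambda>N. v N / u N) \<longlonglongrightarrow> 0"
proof -
  obtain c where c: "(\<lambda>N. arctan (u N / v N)) \<longlonglongrightarrow> c"
    using conv by (auto simp: convergent_def)
  have "c \<le> pi / 2"
    using arctan_ubound less_imp_le by (intro tendsto_upperbound[OF c always_eventually]) auto
  moreover have "0 \<le> c"
    using u v by (intro tendsto_lowerbound[OF c always_eventually]) (simp_all add: less_imp_le)
  ultimately consider "c = pi / 2" | "cos c \<noteq> 0"
    using cos_gt_zero_pi[of c] by fastforce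
  then show ?thesis
  proof cases
    case 1
    have "arctan (v N / u N) = pi / 2 - arctan (u N / v N)" for N
      using arctan_inverse[of "u N / v N"] u[of N] v[of N] by simp
    then have "(\<lambda>N. arctan (v N / u N)) \<longlonglongrightarrow> 0"
      using tendsto_diff[OF tendsto_const c, of "pi / 2"] 1 by simp
    then have "(\<lambda>N. tan (arctan (v N / u N))) \<longlonglongrightarrow> tan 0"
      by (intro isCont_tendsto_compose[OF isCont_tan]) auto
    then show ?thesis by (simp add: tan_arctan)
  next
    case 2
    then have "(\<lambda>N. tan (arctan (u N / v N))) \<longlonglongrightarrow> tan c"
      by (intro isCont_tendsto_compose[OF isCont_tan c])
    then show ?thesis by (auto simp: tan_arctan intro: convergentI)
  qed
qed

lemma ordered_family_negligible_or_comparable: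
  assumes ord: "ordered_family I a" and p: "p \<in> I"
  shows "(\<exists>q\<in>I. (\<lambda>N. a p N / a q N) \<longlonglongrightarrow> 0) \<or> (\<forall>q\<in>I. convergent (\<lambda>N. a q N / a p N))"
proof -
  have pos: "\<And>r N. r \<in> I \<Longrightarrow> a r N > 0"
    and arctan_conv: "\<And>r s. r \<in> I \<Longrightarrow> s \<in> I \<Longrightarrow> r \<noteq> s \<Longrightarrow>
                                convergent (\<lambda>N. arctan (a r N / a s N))"
    using ord unfolding ordered_family_def by auto
  have "convergent (\<lambda>N. a q N / a p N) \<or> (\<lambda>N. a p N / a q N) \<longlonglongrightarrow> 0" if q: "q \<in> I" for q
  proof (cases "q = p")
    case True
    then show ?thesis using pos[OF p] by (simp add: less_imp_neq[symmetric] convergent_const)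
  next
    case False
    then show ?thesis
      by (rule convergent_ratio_or_inverse_ratio_tendsto_0[OF pos[OF q] pos[OF p] arctan_conv[OF q p]])
  qed
  then show ?thesis by blast
qed

text \<open>If \<open>a p\<close> is negligible against some \<open>a q\<close>, its share tends to 0; otherwise the total
  divided by \<open>a p\<close> converges, to a limit at least 1.\<close>

lemma ordered_family_share_convergent:
  assumes ord: "ordered_family I a" and p: "p \<in> I"
  shows "convergent (\<lambda>N. a p N / (\<Sum>r\<in>I. a r N))"
proof -
  have fin: "finite I" and pos: "\<And>r N. r \<in> I \<Longrightarrow> a r N > 0"
    using ord unfolding ordered_family_def by auto
  define S where "S N = (\<Sum>r\<in>I. a r N)" for N
  have member_le_S: "a r N \<le> S N" if "r \<in> I" for r N
    unfolding S_def using fin that pos by (intro member_le_sum) (auto intro: less_imp_le)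
  have S_pos: "S N > 0" for N
    using member_le_S[OF p] pos[OF p] by (rule order.strict_trans2[rotated])
  consider (negligible) q where "q \<in> I" "(\<lambda>N. a p N / a q N) \<longlonglongrightarrow> 0"
    | (comparable) "\<And>q. q \<in> I \<Longrightarrow> convergent (\<lambda>N. a q N / a p N)"
    using ordered_family_negligible_or_comparable[OF ord p] by blast
  then have "convergent (\<lambda>N. a p N / S N)"
  proof cases
    case negligible
    have "(\<lambda>N. a p N / S N) \<longlonglongrightarrow> 0"
    proof (rule tendsto_sandwich[OF _ _ tendsto_const negligible(2)])
      show "\<forall>\<^sub>F N in sequentially. 0 \<le> a p N / S N"
        using pos[OF p] S_pos by (intro always_eventually allI divide_nonneg_nonneg less_imp_le)
      show "\<forall>\<^sub>F N in sequentially. a p N / S N \<le> a p N / a q N"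
        using pos[OF p] pos[OF negligible(1)] S_pos member_le_S[OF negligible(1)]
        by (intro always_eventually allI divide_left_mono) (auto intro: less_imp_le)
    qed
    then show ?thesis by (rule convergentI)
  next
    case comparable
    obtain l where l: "\<And>q. q \<in> I \<Longrightarrow> (\<lambda>N. a q N / a p N) \<longlonglongrightarrow> l q"
      using comparable unfolding convergent_def by metis
    have sum_lim: "(\<lambda>N. S N / a p N) \<longlonglongrightarrow> (\<Sum>q\<in>I. l q)"
      unfolding S_def sum_divide_distrib by (intro tendsto_sum l)
    have "S N / a p N \<ge> 1" for N
      using member_le_S[OF p, of N] pos[OF p, of N] by simp
    then have "(\<Sum>q\<in>I. l q) \<ge> 1"
      by (intro tendsto_lowerbound[OF sum_lim always_eventually]) auto
    then have "(\<lambda>N. 1 / (S N / a p N)) \<longlonglongrightarrow> 1 / (\<Sum>q\<in>I. l q)"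
      by (intro tendsto_intros sum_lim) auto
    then show ?thesis by (auto intro: convergentI)
  qed
  then show ?thesis unfolding S_def .
qed

lemma finite_pos_bonds: "finite E \<Longrightarrow> finite (pos_bonds E R)"
  by (rule finite_subset[of _ "E \<times> E"]) (auto simp: pos_bonds_def)

text \<open>The monomials of degree 1 in Assumption A are the single positive rates: the bond
  \<open>q\<close> corresponds to the exponent vector that is 1 at \<open>q\<close> and 0 elsewhere.\<close>

lemma ordered_family_pos_bonds:
  assumes fin: "finite E" and A: "assumptionA E R"
  shows "ordered_family (pos_bonds E R) (\<lambda>q N. R N (fst q) (snd q))"
proof -
  let ?B = "pos_bonds E R"
  let ?K = "{k :: 'a \<times> 'a \<Rightarrow> nat. (\<forall>p. p \<notin> ?B \<longrightarrow> k p = 0) \<and> (\<Sum>p\<in>?B. k p) = 1}"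
  let ?monomial = "\<lambda>k N. \<Prod>p\<in>?B. R N (fst p) (snd p) ^ k p"
  define unit :: "'a \<times> 'a \<Rightarrow> 'a \<times> 'a \<Rightarrow> nat" where "unit q p = (if p = q then 1 else 0)" for q p
  have finB: "finite ?B" by (rule finite_pos_bonds[OF fin])
  have ord: "ordered_family ?K ?monomial"
    using A unfolding assumptionA_def by auto
  have unit_in_K: "unit q \<in> ?K" if "q \<in> ?B" for q
    using that finB by (auto simp: unit_def sum.delta)
  have monomial_unit: "?monomial (unit q) N = R N (fst q) (snd q)" if "q \<in> ?B" for q N
  proof -
    have "?monomial (unit q) N = (\<Prod>p\<in>?B. if p = q then R N (fst p) (snd p) else 1)"
      by (rule prod.cong) (auto simp: unit_def)
    then show ?thesis using finB that by (simp add: prod.delta)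
  qed
  have unit_neq: "unit q \<noteq> unit q'" if "q \<noteq> q'" for q q'
    using that unfolding unit_def by (metis zero_neq_one)
  show ?thesis
    unfolding ordered_family_def
  proof (intro conjI ballI allI impI)
    fix q q' assume q: "q \<in> ?B" and q': "q' \<in> ?B" and "q \<noteq> q'"
    then have "convergent (\<lambda>N. arctan (?monomial (unit q) N / ?monomial (unit q') N))"
      using ord unit_in_K[OF q] unit_in_K[OF q'] unit_neq unfolding ordered_family_def by blast
    then show "convergent (\<lambda>N. arctan (R N (fst q) (snd q) / R N (fst q') (snd q')))"
      by (simp only: monomial_unit[OF q] monomial_unit[OF q'])
  qed (use finB in \<open>auto simp: pos_bonds_def\<close>)
qed

lemma alpha_nonneg:
  assumes "\<And>x y. x \<in> E \<Longrightarrow> y \<in> E \<Longrightarrow> x \<noteq> y \<Longrightarrow> R N x y \<ge> 0"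
  shows "alpha E R N \<ge> 0"
  unfolding alpha_def using assms by (auto intro!: sum_nonneg)

lemma alpha_eq_inverse_sum_pos_bonds:
  assumes fin: "finite E" and A: "assumptionA E R"
  shows "alpha E R N = 1 / (\<Sum>q\<in>pos_bonds E R. R N (fst q) (snd q))"
proof -
  let ?D = "Sigma E (\<lambda>x. E - {x})"
  have "(\<Sum>x\<in>E. \<Sum>y\<in>E - {x}. R N x y) = (\<Sum>q\<in>?D. R N (fst q) (snd q))"
    using fin by (simp add: sum.Sigma case_prod_beta')
  also have "\<dots> = (\<Sum>q\<in>pos_bonds E R. R N (fst q) (snd q))"
  proof (rule sum.mono_neutral_right)
    show "finite ?D" using fin by auto
    show "pos_bonds E R \<subseteq> ?D" unfolding pos_bonds_def by auto
    show "\<forall>q\<in>?D - pos_bonds E R. R N (fst q) (snd q) = 0"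
      using A unfolding assumptionA_def pos_bonds_def by fastforce
  qed
  finally show ?thesis unfolding alpha_def by simp
qed

lemma alpha_mult_rate_tendsto_limit_rates:
  assumes fin: "finite E" and A: "assumptionA E R"
    and xy: "x \<in> E" "y \<in> E" "x \<noteq> y"
  shows "(\<lambda>N. alpha E R N * R N x y) \<longlonglongrightarrow> limit_rates E R x y"
proof -
  have "convergent (\<lambda>N. alpha E R N * R N x y)"
  proof (cases "(x, y) \<in> pos_bonds E R")
    case True
    then show ?thesis
      using ordered_family_share_convergent[OF ordered_family_pos_bonds[OF fin A] True]
      by (simp add: alpha_eq_inverse_sum_pos_bonds[OF fin A])
  next
    case False
    then have "R N x y = 0" for N
      using A xy unfolding assumptionA_def pos_bonds_def by auto
    then show ?thesis by (simp add: convergent_const)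
  qed
  then show ?thesis
    unfolding limit_rates_def by (simp add: convergent_LIMSEQ_iff)
qed

lemma recurrent_class_closed:
  assumes C: "C \<in> recurrent_classes E Q" and x: "x \<in> C"
    and y: "y \<in> E" "y \<notin> C"
  shows "Q x y \<le> 0"
proof (rule ccontr)
  assume "\<not> Q x y \<le> 0"
  obtain r where r: "recurrent_state E Q r"
    and C_eq: "C = {y \<in> E. reaches E Q r y \<and> reaches E Q y r}"
    using C unfolding recurrent_classes_def by blast
  have "(x, y) \<in> rate_edges E Q"
    using \<open>\<not> Q x y \<le> 0\<close> x y C_eq unfolding rate_edges_def by auto
  moreover have "reaches E Q r x"
    using x C_eq by auto
  ultimately have "reaches E Q r y"
    unfolding reaches_def by (rule rtrancl_into_rtrancl[rotated])
  moreover from this have "reaches E Q y r"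
    using r unfolding recurrent_state_def by blast
  ultimately show False
    using y C_eq by auto
qed

lemma alpha_mult_rate_out_of_recurrent_class_tendsto_0:
  assumes fin: "finite E" and nn: "\<And>N x y. x \<in> E \<Longrightarrow> y \<in> E \<Longrightarrow> x \<noteq> y \<Longrightarrow> R N x y \<ge> 0"
    and A: "assumptionA E R"
    and C: "C \<in> recurrent_classes E (limit_rates E R)" and x: "x \<in> C"
    and y: "y \<in> E" "y \<notin> C"
  shows "(\<lambda>N. alpha E R N * R N x y) \<longlonglongrightarrow> 0"
proof -
  have xE: "x \<in> E" and xy: "x \<noteq> y"
    using C x y unfolding recurrent_classes_def by auto
  note lim = alpha_mult_rate_tendsto_limit_rates[OF fin A xE y(1) xy]
  have "limit_rates E R x y \<ge> 0"
    using alpha_nonneg[of E R, OF nn] nn[OF xE y(1) xy]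
    by (intro tendsto_lowerbound[OF lim always_eventually]) auto
  moreover have "limit_rates E R x y \<le> 0"
    by (rule recurrent_class_closed[OF C x y])
  ultimately show ?thesis
    using lim by simp
qed

lemma scaled_trace_rate_tendsto_0:
  fixes c :: "nat \<Rightarrow> real"
  assumes fin: "finite E" and nn: "\<And>N x y. x \<in> E \<Longrightarrow> y \<in> E \<Longrightarrow> x \<noteq> y \<Longrightarrow> R N x y \<ge> 0"
    and FE: "F \<subseteq> E" and x: "x \<in> F" and y: "y \<in> F"
    and c: "\<And>N. c N \<ge> 0"
    and negligible: "\<And>w. w \<in> insert y (E - F) \<Longrightarrow> (\<lambda>N. c N * R N x w) \<longlonglongrightarrow> 0"
  shows "(\<lambda>N. c N * trace_rate E (R N) F x y) \<longlonglongrightarrow> 0"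
proof -
  have "(\<lambda>N. c N * R N x w * hit_prob E (R N) F w y) \<longlonglongrightarrow> 0" if w: "w \<in> E - F" for w
  proof (rule tendsto_sandwich[OF _ _ tendsto_const negligible])
    have "x \<in> E" "x \<noteq> w"
      using x w FE by auto
    then have rate_nonneg: "c N * R N x w \<ge> 0" for N
      using c nn w by (simp add: mult_nonneg_nonneg)
    have hit_bounds: "0 \<le> hit_prob E (R N) F w y" "hit_prob E (R N) F w y \<le> 1" for N
      using hit_prob_bounds[OF fin nn[where N = N] FE y] by auto
    show "\<forall>\<^sub>F N in sequentially. 0 \<le> c N * R N x w * hit_prob E (R N) F w y"
      by (intro always_eventually allI mult_nonneg_nonneg[OF rate_nonneg hit_bounds(1)])
    show "\<forall>\<^sub>F N in sequentially. c N * R N x w * hit_prob E (R N) F w y \<le> c N * R N x w"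
      using rate_nonneg hit_bounds(2) by (intro always_eventually allI mult_left_le)
  qed (use w in auto)
  then have "(\<lambda>N. c N * R N x y + (\<Sum>w\<in>E - F. c N * R N x w * hit_prob E (R N) F w y))
               \<longlonglongrightarrow> 0 + 0"
    by (intro tendsto_add negligible tendsto_null_sum) auto
  then show ?thesis
    unfolding trace_rate_def by (simp add: distrib_left sum_distrib_left mult.assoc)
qed

theorem mainTheorem14:
  fixes E :: "'a set" and R :: "nat \<Rightarrow> 'a \<Rightarrow> 'a \<Rightarrow> real"
  assumes "finite E"
    and "\<And>N x y. x \<in> E \<Longrightarrow> y \<in> E \<Longrightarrow> x \<noteq> y \<Longrightarrow> R N x y \<ge> 0"
    and "\<And>N. irreducible_rates E (R N)"
    and "assumptionA E R"
    and "card (recurrent_classes E (limit_rates E R)) \<ge> 2"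
  shows "(\<lambda>N. alpha E R N / gamma E R N) \<longlonglongrightarrow> 0"
proof -
  note fin = assms(1) and nn = assms(2) and A = assms(4)
  define Cs where "Cs = recurrent_classes E (limit_rates E R)"
  define Es where "Es = \<Union>Cs"
  have classes_subset: "C \<subseteq> E" if "C \<in> Cs" for C
    using that unfolding Cs_def recurrent_classes_def by auto
  then have "Es \<subseteq> E"
    unfolding Es_def by auto
  have ratio_eq: "alpha E R N / gamma E R N =
      (\<Sum>C\<in>Cs. \<Sum>x\<in>C. \<Sum>y\<in>Es - C. alpha E R N * trace_rate E (R N) Es x y)" for N
    unfolding gamma_def Let_def Cs_def[symmetric] Es_def[symmetric] by (simp add: sum_distrib_left)
  have "(\<lambda>N. alpha E R N * trace_rate E (R N) Es x y) \<longlonglongrightarrow> 0"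
    if "C \<in> Cs" "x \<in> C" "y \<in> Es - C" for C x y
    using that classes_subset \<open>Es \<subseteq> E\<close> alpha_nonneg[of E R, OF nn]
    by (intro scaled_trace_rate_tendsto_0[OF fin nn] alpha_mult_rate_out_of_recurrent_class_tendsto_0
        [OF fin nn A, of C]) (auto simp: Cs_def Es_def)
  then show ?thesis
    unfolding ratio_eq by (intro tendsto_null_sum) auto
qed

end
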